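(* Let $X$ be a first countable, connected, locally path connected space, $n\in\mathbb{N}$, and let $A_1,\dots,A_n$ be pairwise disjoint, path connected, closed subsets of $X$ such that $X/(A_1,\dots,A_n)$ is semi-locally simply connected. Let $p:X\to X/(A_1,\dots,A_n)$ be the quotient map. Then for every $a\in\bigcup_{i=1}^nA_i$, with $*=p(a)$, the induced homomorphism $p_*:\pi_1(X,a)\to\pi_1(X/(A_1,\dots,A_n),* )$ is surjective.
   Context: $X/(A_1,\dots,A_n)$ denotes the quotient space obtained by collapsing each $A_i$ to a point, with quotient map $p$. A space $Y$ is semi-locally simply connected if every $y\in Y$ has an open neighborhood $U$ such that every loop in $U$ based at $y$ is nullhomotopic in $Y$. *)

theory Defs
  imports "HOL-Analysis.Analysis"
begin

definition collapse_rel :: "'a topology \<Rightarrow> nat \<Rightarrow> (nat \<Rightarrow> 'a set) \<Rightarrow> ('a \<times> 'a) set" where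
  "collapse_rel X n A = {(x, y). x \<in> topspace X \<and> y \<in> topspace X \<and>
      (x = y \<or> (\<exists>i\<in>{1..n}. x \<in> A i \<and> y \<in> A i))}"

definition collapse_map :: "'a topology \<Rightarrow> nat \<Rightarrow> (nat \<Rightarrow> 'a set) \<Rightarrow> 'a \<Rightarrow> 'a set" where
  "collapse_map X n A x = collapse_rel X n A `` {x}"

definition collapse_space :: "'a topology \<Rightarrow> nat \<Rightarrow> (nat \<Rightarrow> 'a set) \<Rightarrow> 'a set topology" where
  "collapse_space X n A = topology (\<lambda>U. U \<subseteq> collapse_map X n A ` topspace X \<and>
      openin X {x \<in> topspace X. collapse_map X n A x \<in> U})"

definition homotopic_paths_in :: "'a topology \<Rightarrow> (real \<Rightarrow> 'a) \<Rightarrow> (real \<Rightarrow> 'a) \<Rightarrow> bool" where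
  "homotopic_paths_in X p q \<longleftrightarrow>
     homotopic_with (\<lambda>r. r 0 = p 0 \<and> r 1 = p 1) (subtopology euclideanreal {0..1}) X p q"

definition semi_locally_simply_connected :: "'a topology \<Rightarrow> bool" where
  "semi_locally_simply_connected Y \<longleftrightarrow>
     (\<forall>y \<in> topspace Y. \<exists>U. openin Y U \<and> y \<in> U \<and>
        (\<forall>g. pathin (subtopology Y U) g \<and> g 0 = y \<and> g 1 = y \<longrightarrow>
             homotopic_paths_in Y g (\<lambda>_. y)))"

lemma istopology_collapse_space:
  "istopology (\<lambda>U. U \<subseteq> collapse_map X n A ` topspace X \<and>
      openin X {x \<in> topspace X. collapse_map X n A x \<in> U})"
proof -
  let ?f = "collapse_map X n A"
  have i: "{x \<in> topspace X. ?f x \<in> S \<and> ?f x \<in> T} = {x \<in> topspace X. ?f x \<in> S} \<inter> {x \<in> topspace X. ?f x \<in> T}"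
    for S T by auto
  have u: "{x \<in> topspace X. \<exists>K\<in>\<K>. ?f x \<in> K} = \<Union>((\<lambda>S. {x \<in> topspace X. ?f x \<in> S}) ` \<K>)"
    for \<K> by auto
  show ?thesis unfolding istopology_def
    apply (intro conjI allI impI)
    apply (auto simp only: i)[1]
    apply (simp add: i openin_Int)
    apply (auto simp only: u)[1]
    apply (auto simp: u intro!: openin_Union)
    done
qed

lemma openin_collapse_space:
  "openin (collapse_space X n A) U \<longleftrightarrow> U \<subseteq> collapse_map X n A ` topspace X \<and>
      openin X {x \<in> topspace X. collapse_map X n A x \<in> U}"
  unfolding collapse_space_def
  by (simp add: topology_inverse' [OF istopology_collapse_space])

end

theory Submission
  imports Defs
begin

(* The quotient map p is a homeomorphism from the complement of the A_i onto the open set V of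
   singleton classes, so paths in V lift exactly. Around a collapsed point A_i, local path
   connectedness and the closedness of the other A_j give arbitrarily small open neighbourhoods U
   of A_i whose preimage is path connected and meets no other A_j; by semi-local simple
   connectivity every loop at A_i in U is null-homotopic. A path in U passing through A_i is split
   at such a visit, and each half is homotopic rel endpoints to the image of a path in the preimage
   of U, since two paths in U with common endpoints, one of them A_i, differ by a loop at A_i.
   A Lebesgue number argument turns these local lifts into a lift, up to homotopy, of every path
   in the quotient. A loop at p a with a in A_k thus lifts to a path from a ending in A_k, which is
   closed up inside the path-connected set A_k. *)

definition join_paths :: "(real \<Rightarrow> 'a) \<Rightarrow> (real \<Rightarrow> 'a) \<Rightarrow> real \<Rightarrow> 'a" where
  "join_paths a b = (\<lambda>t. if t \<le> 1/2 then a (2*t) else b (2*t - 1))"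

definition reverse_path :: "(real \<Rightarrow> 'a) \<Rightarrow> real \<Rightarrow> 'a" where
  "reverse_path a = (\<lambda>t. a (1 - t))"

definition path_segment :: "real \<Rightarrow> real \<Rightarrow> (real \<Rightarrow> 'a) \<Rightarrow> real \<Rightarrow> 'a" where
  "path_segment a b g = (\<lambda>u. g (a + (b - a) * u))"

lemma join_paths_0 [simp]: "join_paths a b 0 = a 0"
  and join_paths_1 [simp]: "join_paths a b 1 = b 1"
  by (simp_all add: join_paths_def)

lemma comp_join_paths: "f \<circ> join_paths a b = join_paths (f \<circ> a) (f \<circ> b)"
  by (simp add: join_paths_def fun_eq_iff)

lemma reverse_path_reverse_path [simp]: "reverse_path (reverse_path a) = a"
  by (simp add: reverse_path_def)

lemma affine_unit_interval:
  fixes a b u :: real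
  assumes "a \<le> b" "u \<in> {0..1}"
  shows "a + (b - a) * u \<in> {a..b}"
proof -
  have "(b - a) * u \<le> b - a" "0 \<le> (b - a) * u"
    using assms by (auto simp: mult_left_le)
  then show ?thesis by simp
qed

lemma path_segment_image_subset:
  "a \<le> b \<Longrightarrow> path_segment a b g ` {0..1} \<subseteq> g ` {a..b}"
  unfolding path_segment_def using affine_unit_interval by blast

lemma path_segment_0 [simp]: "path_segment a b g 0 = g a"
  and path_segment_1 [simp]: "path_segment a b g 1 = g b"
  and path_segment_0_1 [simp]: "path_segment 0 1 g = g"
  by (simp_all add: path_segment_def)

lemma pathin_image_subset_topspace: "pathin X g \<Longrightarrow> g ` {0..1} \<subseteq> topspace X"
  by (force simp: pathin_def continuous_map)

lemma pathin_path_segment: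
  assumes g: "pathin Y g" and "0 \<le> a" "a \<le> b" "b \<le> 1"
  shows "pathin Y (path_segment a b g)"
proof -
  have "(\<lambda>u. a + (b - a) * u) ` {0..1} \<subseteq> {0..1}"
    using affine_unit_interval[of a b] assms by force
  then have "continuous_map (top_of_set {0..1}) (top_of_set {0..1}) (\<lambda>u::real. a + (b - a) * u)"
    by (auto simp: continuous_map_in_subtopology intro!: continuous_intros)
  from continuous_map_compose[OF this g[unfolded pathin_def]] show ?thesis
    unfolding pathin_def path_segment_def o_def .
qed

lemma homotopic_paths_in_imp_pathin:
  assumes "homotopic_paths_in Y f g"
  shows "pathin Y f" "pathin Y g" "g 0 = f 0" "g 1 = f 1"
  using homotopic_with_imp_continuous_maps[OF assms[unfolded homotopic_paths_in_def]]
    homotopic_with_imp_property[OF assms[unfolded homotopic_paths_in_def]]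
  by (simp_all add: pathin_def)

lemma homotopic_paths_in_refl: "pathin Y f \<Longrightarrow> homotopic_paths_in Y f f"
  by (simp add: homotopic_paths_in_def pathin_def)

lemma homotopic_paths_in_trans [trans]:
  assumes fg: "homotopic_paths_in Y f g" and gh: "homotopic_paths_in Y g h"
  shows "homotopic_paths_in Y f h"
proof -
  have "g 0 = f 0" "g 1 = f 1" using homotopic_paths_in_imp_pathin[OF fg] by simp_all
  with gh have "homotopic_with (\<lambda>r. r 0 = f 0 \<and> r 1 = f 1) (top_of_set {0..1}) Y g h"
    by (simp add: homotopic_paths_in_def)
  with fg show ?thesis
    unfolding homotopic_paths_in_def by (rule homotopic_with_trans)
qed

lemma homotopic_paths_in_reparametrize:
  assumes g: "pathin Y g"
    and K0: "continuous_on {0..1} K0" "K0 ` {0..1} \<subseteq> {0..1}"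
    and K1: "continuous_on {0..1} K1" "K1 ` {0..1} \<subseteq> {0..1}"
    and ends: "K0 0 = K1 0" "K0 1 = K1 1"
    and f0: "\<And>t. t \<in> {0..1} \<Longrightarrow> f0 t = g (K0 t)"
    and f1: "\<And>t. t \<in> {0..1} \<Longrightarrow> f1 t = g (K1 t)"
  shows "homotopic_paths_in Y f0 f1"
proof -
  define K where "K = (\<lambda>x. (1 - fst x) * K0 (snd x) + fst x * K1 (snd x))"
  have "continuous_on ({0..1} \<times> {0..1}) (\<lambda>x::real \<times> real. K0 (snd x))"
    "continuous_on ({0..1} \<times> {0..1}) (\<lambda>x::real \<times> real. K1 (snd x))"
    by (auto intro!: continuous_on_compose2[OF K0(1) continuous_on_snd]
        continuous_on_compose2[OF K1(1) continuous_on_snd])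
  then have "continuous_on ({0..1} \<times> {0..1}) K"
    unfolding K_def by (intro continuous_intros)
  moreover have "K ` ({0..1} \<times> {0..1}) \<subseteq> {0..1}"
  proof clarify
    fix s t :: real assume s: "s \<in> {0..1}" and t: "t \<in> {0..1}"
    have "K0 t \<in> {0..1}" "K1 t \<in> {0..1}" using K0(2) K1(2) t by blast+
    then have "(1 - s) * K0 t \<le> 1 - s" "s * K1 t \<le> s" "0 \<le> (1 - s) * K0 t" "0 \<le> s * K1 t"
      using s by (auto intro: mult_left_le)
    then show "K (s, t) \<in> {0..1}" unfolding K_def by auto
  qed
  ultimately have "continuous_map (top_of_set ({0..1} \<times> {0..1})) (top_of_set {0..1}) K"
    by (auto simp: continuous_map_in_subtopology)
  then have gK: "continuous_map (top_of_set ({0..1} \<times> {0..1})) Y (g \<circ> K)"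
    using g unfolding pathin_def by (rule continuous_map_compose)
  show ?thesis
    unfolding homotopic_paths_in_def
  proof (subst homotopic_with, simp, intro exI conjI)
    show "continuous_map (prod_topology (top_of_set {0..1}) (top_of_set {0..1})) Y (g \<circ> K)"
      using gK by simp
    show "\<forall>x\<in>topspace (top_of_set {0..1}). (g \<circ> K) (0, x) = f0 x"
      "\<forall>x\<in>topspace (top_of_set {0..1}). (g \<circ> K) (1, x) = f1 x"
      by (simp_all add: K_def f0 f1)
    show "\<forall>t\<in>{0..1}. (\<lambda>x. (g \<circ> K) (t, x)) 0 = f0 0 \<and> (\<lambda>x. (g \<circ> K) (t, x)) 1 = f0 1"
      by (simp add: K_def f0 ends algebra_simps)
  qed
qed

lemma homotopic_paths_in_join:
  assumes a: "homotopic_paths_in Y a a'" and b: "homotopic_paths_in Y b b'" and ab: "a 1 = b 0"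
  shows "homotopic_paths_in Y (join_paths a b) (join_paths a' b')"
proof -
  let ?I = "{0..1::real}"
  obtain ka where ka: "continuous_map (prod_topology (top_of_set ?I) (top_of_set ?I)) Y ka"
    "\<forall>x. ka (0, x) = a x" "\<forall>x. ka (1, x) = a' x" "\<forall>t\<in>?I. ka (t, 0) = a 0 \<and> ka (t, 1) = a 1"
    using a unfolding homotopic_paths_in_def homotopic_with_def by auto
  obtain kb where kb: "continuous_map (prod_topology (top_of_set ?I) (top_of_set ?I)) Y kb"
    "\<forall>x. kb (0, x) = b x" "\<forall>x. kb (1, x) = b' x" "\<forall>t\<in>?I. kb (t, 0) = b 0 \<and> kb (t, 1) = b 1"
    using b unfolding homotopic_paths_in_def homotopic_with_def by auto
  define k where "k = (\<lambda>y::real \<times> real.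
    if snd y \<le> 1/2 then ka (fst y, 2 * snd y) else kb (fst y, 2 * snd y - 1))"
  have "continuous_map (top_of_set (?I \<times> ?I)) Y k"
    unfolding k_def
  proof (rule continuous_map_cases_le)
    let ?S = "top_of_set (?I \<times> ?I)"
    have lo: "subtopology ?S {x \<in> topspace ?S. snd x \<le> 1/2} = top_of_set {x \<in> ?I \<times> ?I. snd x \<le> 1/2}"
      and hi: "subtopology ?S {x \<in> topspace ?S. 1/2 \<le> snd x} = top_of_set {x \<in> ?I \<times> ?I. 1/2 \<le> snd x}"
      by (simp_all add: subtopology_subtopology Int_def)
    have "continuous_map (top_of_set {x \<in> ?I \<times> ?I. snd x \<le> 1/2}) (top_of_set (?I \<times> ?I))
            (\<lambda>y. (fst y, 2 * snd y))"
      by (auto simp: continuous_map_in_subtopology mem_Times_iff intro!: continuous_intros)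
    from continuous_map_compose[OF this] ka(1)
    show "continuous_map (subtopology ?S {x \<in> topspace ?S. snd x \<le> 1/2}) Y (\<lambda>y. ka (fst y, 2 * snd y))"
      unfolding lo by (simp add: o_def)
    have "continuous_map (top_of_set {x \<in> ?I \<times> ?I. 1/2 \<le> snd x}) (top_of_set (?I \<times> ?I))
            (\<lambda>y. (fst y, 2 * snd y - 1))"
      by (auto simp: continuous_map_in_subtopology mem_Times_iff intro!: continuous_intros)
    from continuous_map_compose[OF this] kb(1)
    show "continuous_map (subtopology ?S {x \<in> topspace ?S. 1/2 \<le> snd x}) Y (\<lambda>y. kb (fst y, 2 * snd y - 1))"
      unfolding hi by (simp add: o_def)
    show "ka (fst x, 2 * snd x) = kb (fst x, 2 * snd x - 1)" if "x \<in> topspace ?S" "snd x = 1/2" for x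
    proof -
      have "2 * snd x = 1" "2 * snd x - 1 = 0" using that(2) by simp_all
      then show ?thesis using that(1) ka(4) kb(4) ab by (auto simp: mem_Times_iff)
    qed
  qed (simp_all add: continuous_on_snd)
  then show ?thesis
    unfolding homotopic_paths_in_def homotopic_with_def
    using ka(2-4) kb(2-4) by (intro exI[of _ k]) (auto simp: k_def join_paths_def)
qed

lemma pathin_join_paths:
  assumes "pathin Y a" "pathin Y b" "a 1 = b 0"
  shows "pathin Y (join_paths a b)"
  using homotopic_paths_in_join[OF homotopic_paths_in_refl homotopic_paths_in_refl] assms
    homotopic_paths_in_imp_pathin(1) by metis

lemma homotopic_paths_in_reverse_path:
  assumes "homotopic_paths_in Y f g"
  shows "homotopic_paths_in Y (reverse_path f) (reverse_path g)"
proof -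
  have flip: "continuous_map (top_of_set {0..1}) (top_of_set {0..1}) (\<lambda>t::real. 1 - t)"
    by (auto simp: continuous_map_in_subtopology intro!: continuous_intros)
  have "homotopic_with (\<lambda>r. r 0 = reverse_path f 0 \<and> r 1 = reverse_path f 1)
          (top_of_set {0..1}) Y (f \<circ> (\<lambda>t. 1 - t)) (g \<circ> (\<lambda>t. 1 - t))"
    using assms[unfolded homotopic_paths_in_def] flip
    by (rule homotopic_with_compose_continuous_map_right) (auto simp: reverse_path_def)
  then show ?thesis
    by (simp add: homotopic_paths_in_def reverse_path_def o_def)
qed

lemma pathin_reverse_path: "pathin Y a \<Longrightarrow> pathin Y (reverse_path a)"
  by (metis homotopic_paths_in_imp_pathin(1) homotopic_paths_in_refl homotopic_paths_in_reverse_path)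

lemma homotopic_paths_in_join_path_segments:
  fixes a b c :: real
  assumes g: "pathin Y g" and abc: "0 \<le> a" "a \<le> b" "b \<le> c" "c \<le> 1"
  shows "homotopic_paths_in Y (join_paths (path_segment a b g) (path_segment b c g))
           (path_segment a c g)"
proof (rule homotopic_paths_in_reparametrize[OF g,
      of "\<lambda>t. a + (b - a) * min (2*t) 1 + (c - b) * max (2*t - 1) 0" "\<lambda>t. a + (c - a) * t"])
  show "(\<lambda>t. a + (b - a) * min (2*t) 1 + (c - b) * max (2*t - 1) 0) ` {0..1} \<subseteq> {0..1}"
  proof clarify
    fix t :: real assume "t \<in> {0..1}"
    then have "min (2*t) 1 \<in> {0..1}" "max (2*t - 1) 0 \<in> {0..1}" by auto
    then have "(b - a) * min (2*t) 1 \<in> {0..b - a}" "(c - b) * max (2*t - 1) 0 \<in> {0..c - b}"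
      using affine_unit_interval[of 0 "b - a"] affine_unit_interval[of 0 "c - b"] abc by auto
    then show "a + (b - a) * min (2*t) 1 + (c - b) * max (2*t - 1) 0 \<in> {0..1}"
      using abc by auto
  qed
  show "(\<lambda>t. a + (c - a) * t) ` {0..1} \<subseteq> {0..1}"
    using affine_unit_interval[of a c] abc by force
  show "join_paths (path_segment a b g) (path_segment b c g) t
          = g (a + (b - a) * min (2*t) 1 + (c - b) * max (2*t - 1) 0)" for t
    by (cases "t \<le> 1/2") (simp_all add: join_paths_def path_segment_def algebra_simps)
qed (auto simp: path_segment_def intro!: continuous_intros)

lemma homotopic_paths_in_join_const_right:
  assumes a: "pathin Y a" and b: "\<And>t. t \<in> {0..1} \<Longrightarrow> b t = a 1"
  shows "homotopic_paths_in Y (join_paths a b) a"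
proof (rule homotopic_paths_in_reparametrize[OF a, of "\<lambda>t. min (2*t) 1" "\<lambda>t. t"])
  show "join_paths a b t = a (min (2*t) 1)" if "t \<in> {0..1}" for t
    using that b[of "2*t - 1"] by (simp add: join_paths_def)
qed (auto intro!: continuous_intros)

lemma homotopic_paths_in_join_const_left:
  assumes b: "pathin Y b" and a: "\<And>t. t \<in> {0..1} \<Longrightarrow> a t = b 0"
  shows "homotopic_paths_in Y (join_paths a b) b"
proof (rule homotopic_paths_in_reparametrize[OF b, of "\<lambda>t. max 0 (2*t - 1)" "\<lambda>t. t"])
  show "join_paths a b t = b (max 0 (2*t - 1))" if "t \<in> {0..1}" for t
    using that a[of "2*t"] by (simp add: join_paths_def)
qed (auto intro!: continuous_intros)

definition loops_nullhomotopic_in :: "'a topology \<Rightarrow> 'a set \<Rightarrow> 'a \<Rightarrow> bool" where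
  "loops_nullhomotopic_in Y U y \<longleftrightarrow>
     (\<forall>l. pathin (subtopology Y U) l \<and> l 0 = y \<and> l 1 = y \<longrightarrow> homotopic_paths_in Y l (\<lambda>_. y))"

lemma semi_locally_simply_connected_iff_loops_nullhomotopic:
  "semi_locally_simply_connected Y \<longleftrightarrow>
     (\<forall>y \<in> topspace Y. \<exists>U. openin Y U \<and> y \<in> U \<and> loops_nullhomotopic_in Y U y)"
  by (simp add: semi_locally_simply_connected_def loops_nullhomotopic_in_def)

lemma loops_nullhomotopic_in_subset:
  "loops_nullhomotopic_in Y U y \<Longrightarrow> V \<subseteq> U \<Longrightarrow> loops_nullhomotopic_in Y V y"
  unfolding loops_nullhomotopic_in_def by (metis pathin_subtopology subsetD)

lemma loops_nullhomotopic_in_homotopic_paths_from: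
  assumes loops: "loops_nullhomotopic_in Y U y"
    and \<alpha>: "pathin (subtopology Y U) \<alpha>" and \<beta>: "pathin (subtopology Y U) \<beta>"
    and ends: "\<alpha> 0 = y" "\<beta> 0 = y" "\<alpha> 1 = \<beta> 1"
  shows "homotopic_paths_in Y \<alpha> \<beta>"
proof -
  define P where "P = join_paths \<alpha> (reverse_path \<beta>)"
  have P: "pathin (subtopology Y U) P"
    unfolding P_def using \<alpha> pathin_reverse_path[OF \<beta>] ends
    by (intro pathin_join_paths) (simp_all add: reverse_path_def)
  have \<beta>Y: "pathin Y \<beta>" using \<beta> pathin_subtopology by blast
  \<comment> \<open>On its second half P runs backwards along \<beta>, so join_paths P \<beta> retraces it.\<close>
  have "homotopic_paths_in Y \<alpha> (join_paths P \<beta>)"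
  proof (rule homotopic_paths_in_reparametrize[of Y P "\<lambda>t. t/2" "\<lambda>t. min (2*t) (3/2 - t)"])
    show "pathin Y P" using P pathin_subtopology by blast
    show "\<alpha> t = P (t/2)" if "t \<in> {0..1}" for t
      using that by (simp add: P_def join_paths_def)
    show "join_paths P \<beta> t = P (min (2*t) (3/2 - t))" if t: "t \<in> {0..1}" for t
    proof -
      consider "t \<le> 1/2" | "1/2 < t" "t < 1" | "t = 1" using t by fastforce
      then show ?thesis
        by cases (auto simp: join_paths_def P_def reverse_path_def ends min_def)
    qed
  qed ((intro continuous_intros)?; auto simp: min_def)+
  also have "homotopic_paths_in Y (join_paths P \<beta>) (join_paths (\<lambda>_. y) \<beta>)"
  proof (rule homotopic_paths_in_join)
    show "homotopic_paths_in Y P (\<lambda>_. y)"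
      using loops P unfolding loops_nullhomotopic_in_def
      by (simp add: P_def join_paths_def reverse_path_def ends)
  qed (simp_all add: \<beta>Y homotopic_paths_in_refl P_def join_paths_def reverse_path_def)
  also have "homotopic_paths_in Y (join_paths (\<lambda>_. y) \<beta>) \<beta>"
    using \<beta>Y ends by (intro homotopic_paths_in_join_const_left) simp_all
  finally show ?thesis .
qed

lemma loops_nullhomotopic_in_homotopic_paths_to:
  assumes loops: "loops_nullhomotopic_in Y U y"
    and \<alpha>: "pathin (subtopology Y U) \<alpha>" and \<beta>: "pathin (subtopology Y U) \<beta>"
    and ends: "\<alpha> 1 = y" "\<beta> 1 = y" "\<alpha> 0 = \<beta> 0"
  shows "homotopic_paths_in Y \<alpha> \<beta>"
proof -
  have "homotopic_paths_in Y (reverse_path \<alpha>) (reverse_path \<beta>)"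
    by (rule loops_nullhomotopic_in_homotopic_paths_from[OF loops
          pathin_reverse_path[OF \<alpha>] pathin_reverse_path[OF \<beta>]])
      (simp_all add: reverse_path_def ends)
  from homotopic_paths_in_reverse_path[OF this] show ?thesis by simp
qed

lemma loops_nullhomotopic_in_homotopic_paths_through:
  assumes loops: "loops_nullhomotopic_in Y U y"
    and \<gamma>: "pathin Y \<gamma>" "\<gamma> ` {0..1} \<subseteq> U" and s: "s \<in> {0..1}" "\<gamma> s = y"
    and \<delta>: "pathin (subtopology Y U) \<delta>1" "pathin (subtopology Y U) \<delta>2"
    and ends: "\<delta>1 0 = \<gamma> 0" "\<delta>1 1 = y" "\<delta>2 0 = y" "\<delta>2 1 = \<gamma> 1"
  shows "homotopic_paths_in Y (join_paths \<delta>1 \<delta>2) \<gamma>"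
proof -
  have \<gamma>U: "pathin (subtopology Y U) (path_segment u v \<gamma>)" if "0 \<le> u" "u \<le> v" "v \<le> 1" for u v
  proof -
    have "\<gamma> ` {u..v} \<subseteq> U" using \<gamma>(2) that by (meson atLeastatMost_subset_iff image_mono order_trans)
    then have "path_segment u v \<gamma> ` {0..1} \<subseteq> U"
      using path_segment_image_subset[OF that(2)] by (rule subset_trans[rotated])
    then show ?thesis using pathin_path_segment[OF \<gamma>(1) that] unfolding pathin_subtopology by blast
  qed
  have "homotopic_paths_in Y (join_paths \<delta>1 \<delta>2) (join_paths (path_segment 0 s \<gamma>) (path_segment s 1 \<gamma>))"
  proof (rule homotopic_paths_in_join)
    show "homotopic_paths_in Y \<delta>1 (path_segment 0 s \<gamma>)"
      using loops \<delta>(1) \<gamma>U[of 0 s] s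
      by (intro loops_nullhomotopic_in_homotopic_paths_to) (auto simp: ends)
    show "homotopic_paths_in Y \<delta>2 (path_segment s 1 \<gamma>)"
      using loops \<delta>(2) \<gamma>U[of s 1] s
      by (intro loops_nullhomotopic_in_homotopic_paths_from) (auto simp: ends)
  qed (simp add: ends)
  also have "homotopic_paths_in Y \<dots> \<gamma>"
    using homotopic_paths_in_join_path_segments[OF \<gamma>(1), of 0 s 1] s by simp
  finally show ?thesis .
qed

definition paths_lift_up_to_homotopy :: "'a topology \<Rightarrow> 'b topology \<Rightarrow> ('a \<Rightarrow> 'b) \<Rightarrow> 'b set \<Rightarrow> bool" where
  "paths_lift_up_to_homotopy X Y p W \<longleftrightarrow>
     (\<forall>\<gamma> x. pathin Y \<gamma> \<and> \<gamma> ` {0..1} \<subseteq> W \<and> x \<in> topspace X \<and> p x = \<gamma> 0 \<longrightarrow>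
        (\<exists>h. pathin X h \<and> h 0 = x \<and> p (h 1) = \<gamma> 1 \<and> homotopic_paths_in Y (p \<circ> h) \<gamma>))"

lemma paths_lift_up_to_homotopyI:
  assumes "\<And>\<gamma> x. pathin Y \<gamma> \<Longrightarrow> \<gamma> ` {0..1} \<subseteq> W \<Longrightarrow> x \<in> topspace X \<Longrightarrow> p x = \<gamma> 0 \<Longrightarrow>
             \<exists>h. pathin X h \<and> h 0 = x \<and> p (h 1) = \<gamma> 1 \<and> homotopic_paths_in Y (p \<circ> h) \<gamma>"
  shows "paths_lift_up_to_homotopy X Y p W"
  using assms unfolding paths_lift_up_to_homotopy_def by blast

lemma paths_lift_up_to_homotopyE:
  assumes "paths_lift_up_to_homotopy X Y p W"
    and "pathin Y \<gamma>" "\<gamma> ` {0..1} \<subseteq> W" "x \<in> topspace X" "p x = \<gamma> 0"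
  obtains h where "pathin X h" "h 0 = x" "p (h 1) = \<gamma> 1" "homotopic_paths_in Y (p \<circ> h) \<gamma>"
  using assms unfolding paths_lift_up_to_homotopy_def by blast

lemma pathin_Lebesgue_subdivision:
  assumes g: "pathin Y g" and cover: "\<And>y. y \<in> topspace Y \<Longrightarrow> \<exists>W. openin Y W \<and> y \<in> W \<and> P W"
  obtains N :: nat where "0 < N"
    "\<And>j. j < N \<Longrightarrow> \<exists>W. P W \<and> g ` {real j / N .. real (Suc j) / N} \<subseteq> W"
proof -
  define \<C> where "\<C> = {T. open T \<and> (\<exists>W. P W \<and> g ` (T \<inter> {0..1}) \<subseteq> W)}"
  have cover01: "{0..1} \<subseteq> \<Union>\<C>"
  proof
    fix t :: real assume t: "t \<in> {0..1}"
    then have "g t \<in> topspace Y" using pathin_image_subset_topspace[OF g] by blast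
    then obtain W where W: "openin Y W" "g t \<in> W" "P W" using cover by blast
    have "openin (top_of_set {0..1}) {u \<in> topspace (top_of_set {0..1}). g u \<in> W}"
      using g W(1) unfolding pathin_def by (rule openin_continuous_map_preimage)
    then obtain T where T: "open T" "{u \<in> {0..1}. g u \<in> W} = {0..1} \<inter> T"
      unfolding openin_open by auto
    then have "T \<in> \<C>" using W(3) unfolding \<C>_def by blast
    moreover have "t \<in> T" using T(2) t W(2) by blast
    ultimately show "t \<in> \<Union>\<C>" by blast
  qed
  moreover have "\<C> \<noteq> {}" using cover01 by auto
  moreover have "\<And>T. T \<in> \<C> \<Longrightarrow> open T" unfolding \<C>_def by blast
  ultimately obtain \<delta> where "0 < \<delta>"
    and \<delta>: "\<And>T. T \<subseteq> {0..1} \<Longrightarrow> diameter T < \<delta> \<Longrightarrow> \<exists>B\<in>\<C>. T \<subseteq> B"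
    using Lebesgue_number_lemma[OF compact_Icc] by metis
  obtain N :: nat where N: "1 / \<delta> < N" using reals_Archimedean2 by blast
  then have "0 < N"
    using \<open>0 < \<delta>\<close> by (metis divide_pos_pos gr0I of_nat_0 order_less_asym zero_less_one)
  moreover have "1 / N < \<delta>"
    using N \<open>0 < \<delta>\<close> \<open>0 < N\<close> by (simp add: field_simps)
  moreover have "\<exists>W. P W \<and> g ` {real j / N .. real (Suc j) / N} \<subseteq> W" if "j < N" for j
  proof -
    have sub: "{real j / N .. real (Suc j) / N} \<subseteq> {0..1}"
      using that \<open>0 < N\<close> by (auto simp: divide_simps)
    have "diameter {real j / N .. real (Suc j) / N} = 1 / N"
      using \<open>0 < N\<close> by (simp add: divide_simps)
    then obtain T where "T \<in> \<C>" "{real j / N .. real (Suc j) / N} \<subseteq> T"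
      using \<delta>[OF sub] \<open>1 / N < \<delta>\<close> by auto
    with sub show ?thesis unfolding \<C>_def by blast
  qed
  ultimately show ?thesis using that by blast
qed

lemma paths_lift_up_to_homotopy_topspace:
  assumes local: "\<And>y. y \<in> topspace Y \<Longrightarrow> \<exists>W. openin Y W \<and> y \<in> W \<and> paths_lift_up_to_homotopy X Y p W"
  shows "paths_lift_up_to_homotopy X Y p (topspace Y)"
proof (rule paths_lift_up_to_homotopyI)
  fix g x assume g: "pathin Y g" and x: "x \<in> topspace X" "p x = g 0"
  obtain N :: nat where "0 < N"
    and pieces: "\<And>j. j < N \<Longrightarrow>
      \<exists>W. paths_lift_up_to_homotopy X Y p W \<and> g ` {real j / N .. real (Suc j) / N} \<subseteq> W"
    using pathin_Lebesgue_subdivision[OF g, of "paths_lift_up_to_homotopy X Y p"] local by blast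
  have "\<exists>f. pathin X f \<and> f 0 = x \<and> p (f 1) = g (j / N) \<and>
          homotopic_paths_in Y (p \<circ> f) (path_segment 0 (j / N) g)" if "j \<le> N" for j
    using that
  proof (induction j)
    case 0
    have "pathin Y (\<lambda>_. p x)" using path_start_in_topspace[OF g] x by simp
    then show ?case
      using x by (intro exI[of _ "\<lambda>_. x"]) (simp add: path_segment_def o_def homotopic_paths_in_refl)
  next
    case (Suc j)
    define \<alpha> \<beta> where "\<alpha> = real j / N" and "\<beta> = real (Suc j) / N"
    have ab: "0 \<le> \<alpha>" "\<alpha> \<le> \<beta>" "\<beta> \<le> 1"
      using Suc.prems \<open>0 < N\<close> by (auto simp: \<alpha>_def \<beta>_def divide_simps)
    obtain f where f: "pathin X f" "f 0 = x" "p (f 1) = g \<alpha>"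
        "homotopic_paths_in Y (p \<circ> f) (path_segment 0 \<alpha> g)"
      using Suc.IH Suc.prems unfolding \<alpha>_def by (meson Suc_leD)
    have "j < N" using Suc.prems by simp
    then obtain W where W: "paths_lift_up_to_homotopy X Y p W"
        "g ` {real j / N .. real (Suc j) / N} \<subseteq> W"
      using pieces by blast
    have seg: "path_segment \<alpha> \<beta> g ` {0..1} \<subseteq> W"
      using subset_trans[OF path_segment_image_subset[OF ab(2)] W(2)[folded \<alpha>_def \<beta>_def]] .
    have "p (f 1) = path_segment \<alpha> \<beta> g 0" using f(3) by simp
    then obtain h where h: "pathin X h" "h 0 = f 1" "p (h 1) = path_segment \<alpha> \<beta> g 1"
        "homotopic_paths_in Y (p \<circ> h) (path_segment \<alpha> \<beta> g)"
      by (rule paths_lift_up_to_homotopyE[OF W(1) pathin_path_segment[OF g ab] seg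
            path_finish_in_topspace[OF f(1)]])
    have "homotopic_paths_in Y (p \<circ> join_paths f h) (join_paths (path_segment 0 \<alpha> g) (path_segment \<alpha> \<beta> g))"
      unfolding comp_join_paths using f(4) h(4) by (rule homotopic_paths_in_join) (simp add: h(2))
    also have "homotopic_paths_in Y \<dots> (path_segment 0 \<beta> g)"
      using g order.refl ab by (rule homotopic_paths_in_join_path_segments)
    finally have "homotopic_paths_in Y (p \<circ> join_paths f h) (path_segment 0 \<beta> g)" .
    moreover have "pathin X (join_paths f h)" using f(1) h(1,2) by (simp add: pathin_join_paths)
    moreover have "join_paths f h 0 = x" "p (join_paths f h 1) = g \<beta>" using f(2) h(3) by simp_all
    ultimately show ?case unfolding \<beta>_def by blast
  qed
  from this[of N] \<open>0 < N\<close>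
  show "\<exists>h. pathin X h \<and> h 0 = x \<and> p (h 1) = g 1 \<and> homotopic_paths_in Y (p \<circ> h) g"
    by simp
qed

lemma path_connected_open_neighbourhood:
  assumes lpc: "locally_path_connected_space X" and G: "openin X G"
    and S: "path_connectedin X S" "S \<subseteq> G" "S \<noteq> {}"
  obtains W where "openin X W" "path_connectedin X W" "S \<subseteq> W" "W \<subseteq> G"
proof -
  obtain a where a: "a \<in> S" using S(3) by blast
  define W where "W = path_component_of_set (subtopology X G) a"
  have "locally_path_connected_space (subtopology X G)"
    by (rule locally_path_connected_space_open_subset[OF lpc G])
  then have "openin X W"
    unfolding W_def by (rule openin_trans_full[OF openin_path_component_of_locally_path_connected_space G])
  moreover have "path_connectedin X W"
    using path_connectedin_path_component_of[of "subtopology X G" a] path_connectedin_subtopology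
    unfolding W_def by blast
  moreover have "path_connectedin (subtopology X G) S"
    using path_connectedin_subtopology S(1,2) by blast
  then have "S \<subseteq> W" unfolding W_def using a by (rule path_component_of_maximal)
  moreover have "W \<subseteq> G"
    using path_component_of_subset_topspace[of "subtopology X G" a] unfolding W_def by auto
  ultimately show ?thesis using that by blast
qed

locale collapsed_closed_sets =
  fixes X :: "'a topology" and n :: nat and A :: "nat \<Rightarrow> 'a set"
  assumes disjoint: "\<And>i j. i \<in> {1..n} \<Longrightarrow> j \<in> {1..n} \<Longrightarrow> i \<noteq> j \<Longrightarrow> A i \<inter> A j = {}"
    and closed: "\<And>i. i \<in> {1..n} \<Longrightarrow> closedin X (A i)"
begin

abbreviation p :: "'a \<Rightarrow> 'a set" where "p \<equiv> collapse_map X n A"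
abbreviation Y :: "'a set topology" where "Y \<equiv> collapse_space X n A"

definition collapsed :: "'a set" where "collapsed = (\<Union>i\<in>{1..n}. A i)"
definition V :: "'a set set" where "V = p ` (topspace X - collapsed)"

lemma A_subset_topspace: "i \<in> {1..n} \<Longrightarrow> A i \<subseteq> topspace X"
  using closed closedin_subset by blast

lemma mem_collapse_map:
  "x \<in> topspace X \<Longrightarrow> y \<in> p x \<longleftrightarrow> y \<in> topspace X \<and> (x = y \<or> (\<exists>i\<in>{1..n}. x \<in> A i \<and> y \<in> A i))"
  by (simp add: collapse_map_def collapse_rel_def)

lemma collapse_map_self: "x \<in> topspace X \<Longrightarrow> x \<in> p x"
  by (simp add: mem_collapse_map)

lemma collapse_map_eq_A:
  assumes i: "i \<in> {1..n}" and x: "x \<in> A i"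
  shows "p x = A i"
proof (rule set_eqI)
  fix y
  have xt: "x \<in> topspace X" using A_subset_topspace[OF i] x by blast
  have "j = i" if "j \<in> {1..n}" "x \<in> A j" for j
    using disjoint[OF that(1) i] that(2) x by blast
  then show "y \<in> p x \<longleftrightarrow> y \<in> A i"
    unfolding mem_collapse_map[OF xt] using i x A_subset_topspace[OF i] by blast
qed

lemma collapse_map_eq_singleton: "x \<in> topspace X \<Longrightarrow> x \<notin> collapsed \<Longrightarrow> p x = {x}"
  by (auto simp: mem_collapse_map collapsed_def)

lemma closedin_collapsed: "closedin X collapsed"
  unfolding collapsed_def using closed by (intro closedin_Union) auto

lemma topspace_collapse_space: "topspace Y = p ` topspace X"
proof -
  have "{x \<in> topspace X. p x \<in> p ` topspace X} = topspace X" by auto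
  then have "openin Y (p ` topspace X)"
    by (simp add: openin_collapse_space)
  moreover have "\<And>U. openin Y U \<Longrightarrow> U \<subseteq> p ` topspace X"
    by (simp add: openin_collapse_space)
  ultimately show ?thesis
    using openin_subset by (metis openin_topspace subset_antisym)
qed

lemma continuous_map_collapse_map: "continuous_map X Y p"
  unfolding continuous_map topspace_collapse_space by (auto simp: openin_collapse_space)

lemma collapse_map_preimage_image:
  assumes S: "S \<subseteq> topspace X" and sat: "\<And>i. i \<in> {1..n} \<Longrightarrow> A i \<inter> S \<noteq> {} \<Longrightarrow> A i \<subseteq> S"
  shows "{x \<in> topspace X. p x \<in> p ` S} = S"
proof
  show "{x \<in> topspace X. p x \<in> p ` S} \<subseteq> S"
  proof clarify
    fix x s assume x: "x \<in> topspace X" and s: "s \<in> S" and ps: "p x = p s"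
    then have "x \<in> p s" using collapse_map_self by metis
    then have "s = x \<or> (\<exists>i\<in>{1..n}. s \<in> A i \<and> x \<in> A i)"
      using S s by (simp add: mem_collapse_map subset_iff)
    then show "x \<in> S" using s sat by blast
  qed
qed (use S in auto)

lemma openin_collapse_map_image:
  assumes S: "openin X S" and sat: "\<And>i. i \<in> {1..n} \<Longrightarrow> A i \<inter> S \<noteq> {} \<Longrightarrow> A i \<subseteq> S"
  shows "openin Y (p ` S)"
  using collapse_map_preimage_image[OF openin_subset[OF S] sat] S openin_subset[OF S]
  by (auto simp: openin_collapse_space)

lemma openin_V: "openin Y V"
  unfolding V_def
  by (rule openin_collapse_map_image[OF openin_diff[OF openin_topspace closedin_collapsed]])
    (auto simp: collapsed_def)

lemma collapse_map_in_V_iff: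
  assumes x: "x \<in> topspace X"
  shows "p x \<in> V \<longleftrightarrow> x \<notin> collapsed"
proof
  assume "p x \<in> V"
  then obtain z where z: "z \<in> topspace X" "z \<notin> collapsed" "p z = p x" unfolding V_def by auto
  show "x \<notin> collapsed"
  proof
    assume "x \<in> collapsed"
    then obtain i where i: "i \<in> {1..n}" "x \<in> A i" unfolding collapsed_def by blast
    then have "z \<in> A i" using collapse_map_self[OF z(1)] collapse_map_eq_A z(3) by auto
    with i z(2) show False unfolding collapsed_def by blast
  qed
qed (use x in \<open>auto simp: V_def\<close>)

lemma the_elem_V:
  assumes "y \<in> V"
  shows "the_elem y \<in> topspace X - collapsed" "p (the_elem y) = y"
proof -
  obtain x where "x \<in> topspace X" "x \<notin> collapsed" "y = p x" using assms unfolding V_def by auto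
  then show "the_elem y \<in> topspace X - collapsed" "p (the_elem y) = y"
    using collapse_map_eq_singleton by auto
qed

lemma continuous_map_the_elem: "continuous_map (subtopology Y V) X the_elem"
  unfolding continuous_map
proof (intro conjI allI impI)
  have VY: "V \<subseteq> topspace Y" using openin_V openin_subset by blast
  show "the_elem ` topspace (subtopology Y V) \<subseteq> topspace X"
    using the_elem_V VY by auto
  fix G assume G: "openin X G"
  have eq: "{y \<in> topspace (subtopology Y V). the_elem y \<in> G} = p ` (G - collapsed)"
  proof
    show "{y \<in> topspace (subtopology Y V). the_elem y \<in> G} \<subseteq> p ` (G - collapsed)"
      using the_elem_V by (force simp: image_iff)
    show "p ` (G - collapsed) \<subseteq> {y \<in> topspace (subtopology Y V). the_elem y \<in> G}"
      using VY openin_subset[OF G] collapse_map_eq_singleton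
      by (fastforce simp: V_def)
  qed
  have "openin Y (p ` (G - collapsed))"
    by (rule openin_collapse_map_image[OF openin_diff[OF G closedin_collapsed]])
      (auto simp: collapsed_def)
  moreover have "p ` (G - collapsed) \<subseteq> V" unfolding V_def using openin_subset[OF G] by blast
  ultimately show "openin (subtopology Y V) {y \<in> topspace (subtopology Y V). the_elem y \<in> G}"
    unfolding eq openin_subtopology by (intro exI[of _ "p ` (G - collapsed)"]) auto
qed

lemma paths_lift_up_to_homotopy_V: "paths_lift_up_to_homotopy X Y p V"
proof (rule paths_lift_up_to_homotopyI)
  fix \<gamma> x assume \<gamma>: "pathin Y \<gamma>" "\<gamma> ` {0..1} \<subseteq> V" and x: "x \<in> topspace X" "p x = \<gamma> 0"
  have "pathin (subtopology Y V) \<gamma>" using \<gamma> pathin_subtopology by blast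
  then have "pathin X (the_elem \<circ> \<gamma>)" using continuous_map_the_elem by (rule pathin_compose)
  moreover have "\<gamma> 0 \<in> V" using \<gamma>(2) by auto
  then have "x \<notin> collapsed" using collapse_map_in_V_iff[OF x(1)] x(2) by simp
  then have "(the_elem \<circ> \<gamma>) 0 = x" using collapse_map_eq_singleton[OF x(1)] x(2) by simp
  moreover have p_the_elem: "p (the_elem (\<gamma> t)) = \<gamma> t" if "t \<in> {0..1}" for t
    using the_elem_V(2) \<gamma>(2) that by blast
  then have "p ((the_elem \<circ> \<gamma>) 1) = \<gamma> 1" by simp
  moreover have "homotopic_paths_in Y (p \<circ> (the_elem \<circ> \<gamma>)) \<gamma>"
    using \<gamma>(1) by (rule homotopic_paths_in_reparametrize[of Y \<gamma> "\<lambda>t. t" "\<lambda>t. t"])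
      (simp_all add: p_the_elem)
  ultimately show "\<exists>h. pathin X h \<and> h 0 = x \<and> p (h 1) = \<gamma> 1 \<and> homotopic_paths_in Y (p \<circ> h) \<gamma>"
    by blast
qed

lemma collapse_map_image_subset_V:
  assumes W: "W \<subseteq> topspace X" and i: "i \<in> {1..n}"
    and disj: "\<And>j. j \<in> {1..n} \<Longrightarrow> j \<noteq> i \<Longrightarrow> A j \<inter> W = {}"
  shows "p ` W - {A i} \<subseteq> V"
proof
  fix y assume "y \<in> p ` W - {A i}"
  then obtain x where x: "x \<in> W" "p x \<noteq> A i" "y = p x" by blast
  have "x \<notin> collapsed"
  proof
    assume "x \<in> collapsed"
    then obtain j where j: "j \<in> {1..n}" "x \<in> A j" unfolding collapsed_def by blast
    then show False
      using x disj[OF j(1)] collapse_map_eq_A[OF j] by (cases "j = i") auto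
  qed
  then show "y \<in> V" unfolding V_def using x(1,3) W by auto
qed

lemma collapsed_set_neighbourhood:
  assumes lpc: "locally_path_connected_space X" and i: "i \<in> {1..n}"
    and pc: "path_connectedin X (A i)" and ne: "A i \<noteq> {}"
    and U0: "openin Y U0" "A i \<in> U0"
  obtains U where "openin Y U" "A i \<in> U" "U \<subseteq> U0" "U - {A i} \<subseteq> V"
    "path_connectedin X {x \<in> topspace X. p x \<in> U}"
proof -
  define B where "B = (\<Union>j\<in>{1..n} - {i}. A j)"
  define G where "G = {x \<in> topspace X. p x \<in> U0} - B"
  have "closedin X B" unfolding B_def using closed by (intro closedin_Union) auto
  then have "openin X G"
    unfolding G_def by (intro openin_diff openin_continuous_map_preimage[OF continuous_map_collapse_map U0(1)])
  moreover have "A i \<subseteq> G"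
    using A_subset_topspace[OF i] collapse_map_eq_A[OF i] U0(2) disjoint[OF _ i]
    unfolding G_def B_def by fastforce
  ultimately obtain W where W: "openin X W" "path_connectedin X W" "A i \<subseteq> W" "W \<subseteq> G"
    using path_connected_open_neighbourhood[OF lpc _ pc _ ne] by blast
  have WX: "W \<subseteq> topspace X" using openin_subset[OF W(1)] .
  have disj: "A j \<inter> W = {}" if "j \<in> {1..n}" "j \<noteq> i" for j
    using that W(4) unfolding G_def B_def by blast
  then have sat: "A j \<subseteq> W" if "j \<in> {1..n}" "A j \<inter> W \<noteq> {}" for j
    using that W(3) by blast
  show ?thesis
  proof
    show "openin Y (p ` W)" using W(1) sat by (rule openin_collapse_map_image)
    show "A i \<in> p ` W"
      using ne W(3) collapse_map_eq_A[OF i] by (metis all_not_in_conv image_eqI subsetD)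
    show "p ` W \<subseteq> U0" using W(4) unfolding G_def by auto
    show "p ` W - {A i} \<subseteq> V" using WX i disj by (rule collapse_map_image_subset_V)
    show "path_connectedin X {x \<in> topspace X. p x \<in> p ` W}"
      using W(2) collapse_map_preimage_image[OF WX sat] by simp
  qed
qed

lemma paths_lift_up_to_homotopy_near_collapsed_set:
  assumes i: "i \<in> {1..n}" and pcU: "path_connectedin X {x \<in> topspace X. p x \<in> U}"
    and UV: "U - {A i} \<subseteq> V" and loops: "loops_nullhomotopic_in Y U (A i)"
  shows "paths_lift_up_to_homotopy X Y p U"
proof (rule paths_lift_up_to_homotopyI)
  fix \<gamma> x assume \<gamma>: "pathin Y \<gamma>" "\<gamma> ` {0..1} \<subseteq> U" and x: "x \<in> topspace X" "p x = \<gamma> 0"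
  show "\<exists>h. pathin X h \<and> h 0 = x \<and> p (h 1) = \<gamma> 1 \<and> homotopic_paths_in Y (p \<circ> h) \<gamma>"
  proof (cases "A i \<in> \<gamma> ` {0..1}")
    case False
    then have "\<gamma> ` {0..1} \<subseteq> V" using \<gamma>(2) UV by blast
    then show ?thesis using paths_lift_up_to_homotopyE[OF paths_lift_up_to_homotopy_V \<gamma>(1) _ x] by metis
  next
    case True
    then obtain s where s: "s \<in> {0..1}" "\<gamma> s = A i" by blast
    define P where "P = {x \<in> topspace X. p x \<in> U}"
    obtain a where a: "a \<in> topspace X" "p a = A i"
      using pathin_image_subset_topspace[OF \<gamma>(1)] s topspace_collapse_space by (metis image_iff subsetD)
    obtain z where z: "z \<in> topspace X" "p z = \<gamma> 1"
      using path_finish_in_topspace[OF \<gamma>(1)] topspace_collapse_space by auto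
    have "\<gamma> 0 \<in> U" "\<gamma> s \<in> U" "\<gamma> 1 \<in> U" using \<gamma>(2) s(1) by auto
    then have "x \<in> P" "a \<in> P" "z \<in> P"
      unfolding P_def using x a z s(2) by simp_all
    then obtain h1 h2 where h1: "pathin X h1" "h1 \<in> {0..1} \<rightarrow> P" "h1 0 = x" "h1 1 = a"
      and h2: "pathin X h2" "h2 \<in> {0..1} \<rightarrow> P" "h2 0 = a" "h2 1 = z"
      using pcU unfolding path_connectedin P_def by blast
    have hU: "pathin (subtopology Y U) (p \<circ> h)" if "pathin X h" "h \<in> {0..1} \<rightarrow> P" for h
      using pathin_compose[OF that(1) continuous_map_collapse_map] that(2)
      unfolding pathin_subtopology P_def by auto
    have "homotopic_paths_in Y (p \<circ> join_paths h1 h2) \<gamma>"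
      unfolding comp_join_paths using loops \<gamma> s hU[OF h1(1,2)] hU[OF h2(1,2)]
      by (rule loops_nullhomotopic_in_homotopic_paths_through) (simp_all add: h1 h2 a x z)
    then show ?thesis
      using pathin_join_paths[OF h1(1) h2(1)] h1 h2 z by auto
  qed
qed

lemma collapse_space_paths_lift_locally:
  assumes lpc: "locally_path_connected_space X" and pc: "\<And>i. i \<in> {1..n} \<Longrightarrow> path_connectedin X (A i)"
    and slsc: "semi_locally_simply_connected Y" and y: "y \<in> topspace Y"
  shows "\<exists>W. openin Y W \<and> y \<in> W \<and> paths_lift_up_to_homotopy X Y p W"
proof -
  obtain x where x: "x \<in> topspace X" "y = p x" using y topspace_collapse_space by auto
  show ?thesis
  proof (cases "x \<in> collapsed")
    case False
    then show ?thesis using openin_V paths_lift_up_to_homotopy_V collapse_map_in_V_iff[OF x(1)] x(2) by blast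
  next
    case True
    then obtain i where i: "i \<in> {1..n}" "x \<in> A i" unfolding collapsed_def by blast
    then have yA: "y = A i" using collapse_map_eq_A x(2) by simp
    obtain U0 where U0: "openin Y U0" "A i \<in> U0" "loops_nullhomotopic_in Y U0 (A i)"
      using slsc y unfolding semi_locally_simply_connected_iff_loops_nullhomotopic yA by blast
    obtain U where U: "openin Y U" "A i \<in> U" "U \<subseteq> U0" "U - {A i} \<subseteq> V"
        "path_connectedin X {x \<in> topspace X. p x \<in> U}"
      using collapsed_set_neighbourhood[OF lpc i(1) pc[OF i(1)] _ U0(1,2)] i(2) by blast
    have "paths_lift_up_to_homotopy X Y p U"
      using i(1) U(5,4) loops_nullhomotopic_in_subset[OF U0(3) U(3)]
      by (rule paths_lift_up_to_homotopy_near_collapsed_set)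
    then show ?thesis using U(1,2) yA by blast
  qed
qed

lemma collapse_map_lifts_loops:
  assumes lpc: "locally_path_connected_space X" and pc: "\<And>i. i \<in> {1..n} \<Longrightarrow> path_connectedin X (A i)"
    and slsc: "semi_locally_simply_connected Y" and k: "k \<in> {1..n}" "a \<in> A k"
    and g: "pathin Y g" "g 0 = p a" "g 1 = p a"
  shows "\<exists>f. pathin X f \<and> f 0 = a \<and> f 1 = a \<and> homotopic_paths_in Y (p \<circ> f) g"
proof -
  have a: "a \<in> topspace X" "p a = A k" using A_subset_topspace k collapse_map_eq_A by auto
  obtain f where f: "pathin X f" "f 0 = a" "p (f 1) = A k" "homotopic_paths_in Y (p \<circ> f) g"
    using paths_lift_up_to_homotopyE[OF paths_lift_up_to_homotopy_topspace
        [OF collapse_space_paths_lift_locally[OF lpc pc slsc]] g(1) pathin_image_subset_topspace[OF g(1)] a(1)]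
      g a by metis
  have "f 1 \<in> A k" using collapse_map_self[OF path_finish_in_topspace[OF f(1)]] f(3) by simp
  then obtain r where r: "pathin X r" "r ` {0..1} \<subseteq> A k" "r 0 = f 1" "r 1 = a"
    using pc[OF k(1)] k(2) unfolding path_connectedin image_subset_iff_funcset by blast
  have "(p \<circ> r) t = (p \<circ> f) 1" if "t \<in> {0..1}" for t
  proof -
    have "r t \<in> A k" using r(2) that by blast
    then show ?thesis using collapse_map_eq_A[OF k(1)] f(3) by simp
  qed
  then have "homotopic_paths_in Y (p \<circ> join_paths f r) (p \<circ> f)"
    unfolding comp_join_paths using pathin_compose[OF f(1) continuous_map_collapse_map]
    by (intro homotopic_paths_in_join_const_right)
  also note f(4)
  finally show ?thesis
    using pathin_join_paths[OF f(1) r(1)] f(2) r(3,4) by auto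
qed

end

theorem corollary3p13:
  fixes X :: "'a topology" and n :: nat and A :: "nat \<Rightarrow> 'a set"
  assumes "first_countable X"
    and "connected_space X"
    and "locally_path_connected_space X"
    and "\<forall>i\<in>{1..n}. \<forall>j\<in>{1..n}. i \<noteq> j \<longrightarrow> A i \<inter> A j = {}"
    and "\<forall>i\<in>{1..n}. path_connectedin X (A i)"
    and "\<forall>i\<in>{1..n}. closedin X (A i)"
    and "semi_locally_simply_connected (collapse_space X n A)"
  shows "\<forall>a \<in> (\<Union>i\<in>{1..n}. A i). \<forall>g.
           pathin (collapse_space X n A) g \<and>
           g 0 = collapse_map X n A a \<and> g 1 = collapse_map X n A a \<longrightarrow>
           (\<exists>f. pathin X f \<and> f 0 = a \<and> f 1 = a \<and>
                homotopic_paths_in (collapse_space X n A) (collapse_map X n A \<circ> f) g)"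
proof -
  interpret collapsed_closed_sets X n A
    using assms(4,6) by unfold_locales auto
  show ?thesis
    using collapse_map_lifts_loops[OF assms(3) _ assms(7)] assms(5) by blast
qed

end
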